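(* Every bipartite TRVG on $n$ vertices has at most $2n-2$ edges. Moreover, this bound is best possible for $n\ge 7$: for every $n\ge 7$ there exists a bipartite TRVG on $n$ vertices with exactly $2n-2$ edges.
   Context: A graph $G$ is a transparent rectangle visibility graph (TRVG) if its vertices can be represented by a collection of pairwise non-overlapping rectangles in the plane whose sides are parallel to the coordinate axes, one per vertex, such that two distinct vertices are adjacent if and only if there is a horizontal or a vertical line intersecting the interiors of both of their rectangles (other rectangles do not block visibility). *)

theory Defs
  imports Complex_Main
begin

definition simple_graph :: "'a set \<Rightarrow> 'a set set \<Rightarrow> bool" where
  "simple_graph V E \<longleftrightarrow> finite V \<and>
     (\<forall>e\<in>E. \<exists>u v. e = {u, v} \<and> u \<noteq> v \<and> u \<in> V \<and> v \<in> V)"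

definition bipartite :: "'a set \<Rightarrow> 'a set set \<Rightarrow> bool" where
  "bipartite V E \<longleftrightarrow> (\<exists>A B. A \<union> B = V \<and> A \<inter> B = {} \<and>
     (\<forall>e\<in>E. e \<inter> A \<noteq> {} \<and> e \<inter> B \<noteq> {}))"

text \<open>An axis-parallel rectangle [x1,x2] x [y1,y2] with x1 < x2, y1 < y2,
  represented by ((x1,x2),(y1,y2)).\<close>
type_synonym rect = "(real \<times> real) \<times> (real \<times> real)"

definition proper_rect :: "rect \<Rightarrow> bool" where
  "proper_rect r \<longleftrightarrow> fst (fst r) < snd (fst r) \<and> fst (snd r) < snd (snd r)"

definition rect_interior :: "rect \<Rightarrow> (real \<times> real) set" where
  "rect_interior r = {fst (fst r)<..<snd (fst r)} \<times> {fst (snd r)<..<snd (snd r)}"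

definition hline :: "real \<Rightarrow> (real \<times> real) set" where
  "hline c = {p. snd p = c}"

definition vline :: "real \<Rightarrow> (real \<times> real) set" where
  "vline c = {p. fst p = c}"

definition rect_visible :: "rect \<Rightarrow> rect \<Rightarrow> bool" where
  "rect_visible r s \<longleftrightarrow>
     (\<exists>c. hline c \<inter> rect_interior r \<noteq> {} \<and> hline c \<inter> rect_interior s \<noteq> {}) \<or>
     (\<exists>c. vline c \<inter> rect_interior r \<noteq> {} \<and> vline c \<inter> rect_interior s \<noteq> {})"

definition TRVG :: "'a set \<Rightarrow> 'a set set \<Rightarrow> bool" where
  "TRVG V E \<longleftrightarrow> simple_graph V E \<and>
     (\<exists>R :: 'a \<Rightarrow> rect.
        (\<forall>v\<in>V. proper_rect (R v)) \<and>
        (\<forall>u\<in>V. \<forall>v\<in>V. u \<noteq> v \<longrightarrow> rect_interior (R u) \<inter> rect_interior (R v) = {}) \<and>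
        (\<forall>u\<in>V. \<forall>v\<in>V. u \<noteq> v \<longrightarrow> ({u, v} \<in> E \<longleftrightarrow> rect_visible (R u) (R v))))"

end

theory Submission
  imports Defs
begin

text \<open>Project a rectangle representation onto the two axes. Two rectangles see each other
  exactly when their projections on one of the axes overlap, so the edge set of the graph is
  the union of the edge sets of two interval graphs, and each of these is a subgraph of the
  graph itself, hence triangle-free when the graph is bipartite. A triangle-free interval graph
  is a forest: the neighbours of the interval that ends first all contain points just before
  its right end and so pairwise overlap, hence there is at most one of them, and removing that
  interval inductively bounds the number of edges by the number of vertices minus one. This
  gives the bound \<open>2 (n - 1)\<close>.

  For the lower bound, seven rectangles realise \<open>K\<^sub>4\<^sub>,\<^sub>3\<close>, which has
  \<open>12 = 2 \<cdot> 7 - 2\<close> edges, and every further rectangle is placed so that it sees exactly two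
  of them.\<close>

definition intersection_edges :: "'a set \<Rightarrow> ('a \<Rightarrow> 'b set) \<Rightarrow> 'a set set" where
  "intersection_edges V S = {{u, v} | u v. u \<in> V \<and> v \<in> V \<and> u \<noteq> v \<and> S u \<inter> S v \<noteq> {}}"

definition triangle_free :: "'a set set \<Rightarrow> bool" where
  "triangle_free E \<longleftrightarrow> \<not> (\<exists>u v w. {u, v} \<in> E \<and> {v, w} \<in> E \<and> {u, w} \<in> E)"

lemma triangle_free_subset: "triangle_free E \<Longrightarrow> F \<subseteq> E \<Longrightarrow> triangle_free F"
  unfolding triangle_free_def by blast

lemma bipartite_edge_sides:
  assumes "A \<inter> B = {}" "{u, v} \<inter> A \<noteq> {}" "{u, v} \<inter> B \<noteq> {}"
  shows "u \<in> A \<longleftrightarrow> v \<notin> A"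
  using assms by blast

lemma bipartite_triangle_free: "bipartite V E \<Longrightarrow> triangle_free E"
  unfolding bipartite_def triangle_free_def by (metis bipartite_edge_sides)

lemma intersection_edges_mono: "V \<subseteq> W \<Longrightarrow> intersection_edges V S \<subseteq> intersection_edges W S"
  unfolding intersection_edges_def by blast

lemma finite_intersection_edges:
  assumes "finite V"
  shows "finite (intersection_edges V S)"
proof -
  have "intersection_edges V S \<subseteq> (\<lambda>(u, v). {u, v}) ` (V \<times> V)"
    unfolding intersection_edges_def by auto
  then show ?thesis
    using assms by (auto intro: finite_subset)
qed

lemma doubleton_in_intersection_edges:
  "u \<in> V \<Longrightarrow> v \<in> V \<Longrightarrow> u \<noteq> v \<Longrightarrow> S u \<inter> S v \<noteq> {} \<Longrightarrow> {u, v} \<in> intersection_edges V S"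
  unfolding intersection_edges_def by blast

lemma intervals_meet_if_meet_earliest_ending:
  fixes a b :: "'a \<Rightarrow> 'b::linorder"
  assumes "b w \<le> b x" "b w \<le> b y"
    and "{a w<..<b w} \<inter> {a x<..<b x} \<noteq> {}" "{a w<..<b w} \<inter> {a y<..<b y} \<noteq> {}"
  shows "{a x<..<b x} \<inter> {a y<..<b y} \<noteq> {}"
proof -
  obtain p q where p: "p \<in> {a w<..<b w} \<inter> {a x<..<b x}" and q: "q \<in> {a w<..<b w} \<inter> {a y<..<b y}"
    using assms(3,4) by blast
  then have "q \<in> {a x<..<b x} \<inter> {a y<..<b y} \<or> p \<in> {a x<..<b x} \<inter> {a y<..<b y}"
    using assms(1,2) by (cases "p \<le> q") auto
  then show ?thesis by blast
qed

lemma intersection_edges_remove_simplicial: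
  assumes triangle_free: "triangle_free (intersection_edges V S)" and "w \<in> V"
    and simplicial: "\<And>x y. x \<in> V \<Longrightarrow> y \<in> V \<Longrightarrow> S w \<inter> S x \<noteq> {} \<Longrightarrow> S w \<inter> S y \<noteq> {} \<Longrightarrow>
      S x \<inter> S y \<noteq> {}"
  shows "intersection_edges V S \<subseteq> intersection_edges (V - {w}) S \<or>
    (\<exists>x \<in> V - {w}. intersection_edges V S \<subseteq> insert {w, x} (intersection_edges (V - {w}) S))"
proof -
  define N where "N = {x \<in> V - {w}. S w \<inter> S x \<noteq> {}}"
  have N_edge: "{w, x} \<in> intersection_edges V S" if "x \<in> N" for x
    using that \<open>w \<in> V\<close> unfolding N_def by (auto intro: doubleton_in_intersection_edges)
  have N_unique: "y = x" if "x \<in> N" "y \<in> N" for x y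
  proof (rule ccontr)
    assume "y \<noteq> x"
    moreover have "S x \<inter> S y \<noteq> {}"
      using that simplicial unfolding N_def by blast
    ultimately have "{x, y} \<in> intersection_edges V S"
      using that unfolding N_def by (blast intro: doubleton_in_intersection_edges)
    with N_edge[OF that(1)] N_edge[OF that(2)] triangle_free show False
      unfolding triangle_free_def by blast
  qed
  have edge_cases: "e \<in> intersection_edges (V - {w}) S \<or> (\<exists>x \<in> N. e = {w, x})"
    if edge: "e \<in> intersection_edges V S" for e
  proof -
    obtain u v where e: "e = {u, v}" "u \<in> V" "v \<in> V" "u \<noteq> v" "S u \<inter> S v \<noteq> {}"
      using edge unfolding intersection_edges_def by blast
    consider "u = w" | "v = w" | "u \<noteq> w" "v \<noteq> w" by blast
    then show ?thesis
    proof cases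
      case 1
      then show ?thesis using e unfolding N_def by blast
    next
      case 2
      then have "u \<in> N" using e unfolding N_def by (auto simp: Int_commute)
      then show ?thesis using e 2 by (metis insert_commute)
    next
      case 3
      then show ?thesis using e by (simp add: doubleton_in_intersection_edges)
    qed
  qed
  show ?thesis
  proof (cases "N = {}")
    case True
    then show ?thesis using edge_cases by blast
  next
    case False
    then obtain x where "x \<in> N" by blast
    then have "intersection_edges V S \<subseteq> insert {w, x} (intersection_edges (V - {w}) S)"
      using edge_cases N_unique by blast
    then show ?thesis using \<open>x \<in> N\<close> unfolding N_def by blast
  qed
qed

lemma card_interval_intersection_edges_le:
  fixes a b :: "'a \<Rightarrow> 'b::linorder"
  assumes "finite V" "triangle_free (intersection_edges V (\<lambda>v. {a v<..<b v}))"
  shows "card (intersection_edges V (\<lambda>v. {a v<..<b v})) \<le> card V - 1"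
  using assms
proof (induction V rule: finite_remove_induct)
  case empty
  then show ?case by (simp add: intersection_edges_def)
next
  case (remove V)
  let ?S = "\<lambda>v. {a v<..<b v}"
  obtain w where w: "w \<in> V" "\<And>v. v \<in> V \<Longrightarrow> b w \<le> b v"
    using arg_min_if_finite[OF remove.hyps(1,2), of b] by (meson not_less)
  have fin: "finite (intersection_edges (V - {w}) ?S)"
    using remove.hyps(1) by (simp add: finite_intersection_edges)
  have "triangle_free (intersection_edges (V - {w}) ?S)"
    using remove.prems intersection_edges_mono[of "V - {w}" V] by (blast intro: triangle_free_subset)
  with remove.IH[OF w(1)] have IH: "card (intersection_edges (V - {w}) ?S) \<le> card V - 2"
    using w(1) by simp
  have w_simplicial: "{a x<..<b x} \<inter> {a y<..<b y} \<noteq> {}"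
    if "x \<in> V" "y \<in> V" "?S w \<inter> ?S x \<noteq> {}" "?S w \<inter> ?S y \<noteq> {}" for x y
    using w(2)[OF that(1)] w(2)[OF that(2)] that(3,4) by (rule intervals_meet_if_meet_earliest_ending)
  have "intersection_edges V ?S \<subseteq> intersection_edges (V - {w}) ?S \<or>
    (\<exists>x \<in> V - {w}. intersection_edges V ?S \<subseteq> insert {w, x} (intersection_edges (V - {w}) ?S))"
    using remove.prems w(1) w_simplicial by (rule intersection_edges_remove_simplicial)
  then show ?case
  proof (elim disjE bexE)
    assume "intersection_edges V ?S \<subseteq> intersection_edges (V - {w}) ?S"
    from IH card_mono[OF fin this] show ?case by linarith
  next
    fix x assume x: "x \<in> V - {w}"
      and sub: "intersection_edges V ?S \<subseteq> insert {w, x} (intersection_edges (V - {w}) ?S)"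
    have "card {w, x} \<le> card V"
      using x w(1) by (intro card_mono[OF remove.hyps(1)]) auto
    then have "2 \<le> card V" using x by (auto simp: card_insert_if)
    moreover have "card (intersection_edges V ?S) \<le> Suc (card (intersection_edges (V - {w}) ?S))"
      using card_mono[OF _ sub] fin by (simp add: card_insert_if split: if_splits)
    ultimately show ?case using IH by linarith
  qed
qed

definition rect_xspan :: "rect \<Rightarrow> real set" where
  "rect_xspan r = {fst (fst r)<..<snd (fst r)}"

definition rect_yspan :: "rect \<Rightarrow> real set" where
  "rect_yspan r = {fst (snd r)<..<snd (snd r)}"

lemma rect_interior_eq_spans: "rect_interior r = rect_xspan r \<times> rect_yspan r"
  by (simp add: rect_interior_def rect_xspan_def rect_yspan_def)

lemma proper_rect_iff_spans: "proper_rect r \<longleftrightarrow> rect_xspan r \<noteq> {} \<and> rect_yspan r \<noteq> {}"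
  by (simp add: proper_rect_def rect_xspan_def rect_yspan_def not_le)

lemma rect_interiors_disjoint_iff:
  "rect_interior r \<inter> rect_interior s = {} \<longleftrightarrow>
    rect_xspan r \<inter> rect_xspan s = {} \<or> rect_yspan r \<inter> rect_yspan s = {}"
  by (simp add: rect_interior_eq_spans Times_Int_Times)

lemma rect_visible_iff_spans_meet:
  assumes "proper_rect r" "proper_rect s"
  shows "rect_visible r s \<longleftrightarrow>
    rect_xspan r \<inter> rect_xspan s \<noteq> {} \<or> rect_yspan r \<inter> rect_yspan s \<noteq> {}"
proof -
  have "hline c = UNIV \<times> {c}" "vline c = {c} \<times> UNIV" for c
    by (auto simp: hline_def vline_def)
  then have hline: "hline c \<inter> rect_interior t \<noteq> {} \<longleftrightarrow> c \<in> rect_yspan t"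
    and vline: "vline c \<inter> rect_interior t \<noteq> {} \<longleftrightarrow> c \<in> rect_xspan t"
    if "proper_rect t" for c t
    using that by (simp_all add: rect_interior_eq_spans proper_rect_iff_spans Times_Int_Times)
  show ?thesis
    using assms unfolding rect_visible_def by (auto simp: hline vline)
qed

lemma card_edges_le_if_bipartite_TRVG:
  assumes "TRVG V E" "bipartite V E"
  shows "card E \<le> 2 * card V - 2"
proof -
  obtain R where proper: "\<And>v. v \<in> V \<Longrightarrow> proper_rect (R v)"
    and visible: "\<And>u v. u \<in> V \<Longrightarrow> v \<in> V \<Longrightarrow> u \<noteq> v \<Longrightarrow> {u, v} \<in> E \<longleftrightarrow> rect_visible (R u) (R v)"
    using assms(1) unfolding TRVG_def by metis
  have "finite V" and simple: "\<And>e. e \<in> E \<Longrightarrow> \<exists>u v. e = {u, v} \<and> u \<noteq> v \<and> u \<in> V \<and> v \<in> V"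
    using assms(1) unfolding TRVG_def simple_graph_def by blast+
  let ?X = "\<lambda>v. rect_xspan (R v)" and ?Y = "\<lambda>v. rect_yspan (R v)"
  have edge_iff: "{u, v} \<in> E \<longleftrightarrow> ?X u \<inter> ?X v \<noteq> {} \<or> ?Y u \<inter> ?Y v \<noteq> {}"
    if "u \<in> V" "v \<in> V" "u \<noteq> v" for u v
    using that by (simp add: visible proper rect_visible_iff_spans_meet)
  have E_eq: "E = intersection_edges V ?X \<union> intersection_edges V ?Y"
  proof
    show "E \<subseteq> intersection_edges V ?X \<union> intersection_edges V ?Y"
      using simple edge_iff by (fastforce intro: doubleton_in_intersection_edges)
    show "intersection_edges V ?X \<union> intersection_edges V ?Y \<subseteq> E"
      using edge_iff unfolding intersection_edges_def by blast
  qed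
  have "triangle_free E"
    using assms(2) by (rule bipartite_triangle_free)
  then have "triangle_free (intersection_edges V ?X)" "triangle_free (intersection_edges V ?Y)"
    by (simp_all add: E_eq triangle_free_subset)
  then have "card (intersection_edges V ?X) \<le> card V - 1" "card (intersection_edges V ?Y) \<le> card V - 1"
    using card_interval_intersection_edges_le[OF \<open>finite V\<close>]
    by (simp_all add: rect_xspan_def rect_yspan_def)
  moreover have "card E \<le> card (intersection_edges V ?X) + card (intersection_edges V ?Y)"
    unfolding E_eq by (rule card_Un_le)
  ultimately show ?thesis by linarith
qed


text \<open>Vertices \<open>0..3\<close> and \<open>4..6\<close> form \<open>K\<^sub>4\<^sub>,\<^sub>3\<close>: on each axis the base
  intervals have length 3 and start at \<open>2 p\<close> for a position \<open>p\<close>, so two of them overlap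
  iff their positions are adjacent. The x-positions order the vertices as \<open>2,4,3,5,0,6,1\<close>
  and the y-positions as \<open>0,4,1,5,2,6,3\<close>, two paths that together cover the twelve edges.
  Rectangle 0 is stretched downwards and rectangle 1 to the right, so that each further small
  square, placed down and to the right of all base rectangles, sees exactly 0 and 1.\<close>
definition extremal_rect :: "nat \<Rightarrow> nat \<Rightarrow> rect" where
  "extremal_rect n v =
    (if v < 7 then
       let p = [4, 6, 0, 2, 1, 3, 5] ! v; q = [0, 2, 4, 6, 1, 3, 5] ! v in
       ((2 * real p, if v = 1 then 2 * real n else 2 * real p + 3),
        (if v = 0 then - 2 * real n else 2 * real q, 2 * real q + 3))
     else ((2 * real v, 2 * real v + 1), (- 2 * real v, 1 - 2 * real v)))"

definition extremal_edges :: "nat \<Rightarrow> nat set set" where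
  "extremal_edges n = (\<lambda>(u, v). {u, v}) ` ({..<4} \<times> {4..<7} \<union> {..<2} \<times> {7..<n})"

lemma doubleton_in_extremal_edges_iff:
  "{u, v} \<in> extremal_edges n \<longleftrightarrow>
    (u < 4 \<and> 4 \<le> v \<and> v < 7) \<or> (v < 4 \<and> 4 \<le> u \<and> u < 7) \<or>
    (u < 2 \<and> 7 \<le> v \<and> v < n) \<or> (v < 2 \<and> 7 \<le> u \<and> u < n)"
  unfolding extremal_edges_def by (auto simp: doubleton_eq_iff)

lemma extremal_edgeE:
  assumes "e \<in> extremal_edges n" "7 \<le> n"
  obtains u v where "e = {u, v}" "u < 4" "4 \<le> v" "v < n"
  using assms unfolding extremal_edges_def by fastforce

lemma proper_extremal_rect: "7 \<le> n \<Longrightarrow> proper_rect (extremal_rect n v)"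
  by (cases "v < 7")
    (auto simp: extremal_rect_def proper_rect_def less_Suc_eq numeral_eq_Suc)

lemma extremal_rect_spans:
  fixes n u v :: nat
  defines "X \<equiv> \<lambda>v. rect_xspan (extremal_rect n v)" and "Y \<equiv> \<lambda>v. rect_yspan (extremal_rect n v)"
  assumes n: "7 \<le> n" and uv: "u < n" "v < n" "u \<noteq> v"
  shows "X u \<inter> X v \<noteq> {} \<or> Y u \<inter> Y v \<noteq> {} \<longleftrightarrow> {u, v} \<in> extremal_edges n"
    and "X u \<inter> X v = {} \<or> Y u \<inter> Y v = {}"
proof -
  note spans = X_def Y_def extremal_rect_def rect_xspan_def rect_yspan_def
    doubleton_in_extremal_edges_iff
  have small: "w < 7 \<Longrightarrow> w \<in> {0, 1, 2, 3, 4, 5, 6}" for w :: nat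
    by auto
  consider "u < 7" "v < 7" | "u < 7" "7 \<le> v" | "7 \<le> u" "v < 7" | "7 \<le> u" "7 \<le> v"
    by linarith
  then have "(X u \<inter> X v \<noteq> {} \<or> Y u \<inter> Y v \<noteq> {} \<longleftrightarrow> {u, v} \<in> extremal_edges n) \<and>
    (X u \<inter> X v = {} \<or> Y u \<inter> Y v = {})"
  proof cases
    case 1
    with small[OF 1(1)] small[OF 1(2)] n uv show ?thesis
      by (elim insertE emptyE; simp add: spans)
  next
    case 2
    with small[OF 2(1)] n uv show ?thesis
      by (elim insertE emptyE; simp add: spans)
  next
    case 3
    with small[OF 3(2)] n uv show ?thesis
      by (elim insertE emptyE; simp add: spans)
  next
    case 4
    then have "real u + 1 \<le> real v \<or> real v + 1 \<le> real u"
      using uv(3) by linarith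
    with 4 show ?thesis
      by (auto simp: spans)
  qed
  then show "X u \<inter> X v \<noteq> {} \<or> Y u \<inter> Y v \<noteq> {} \<longleftrightarrow> {u, v} \<in> extremal_edges n"
    and "X u \<inter> X v = {} \<or> Y u \<inter> Y v = {}"
    by blast+
qed

lemma TRVG_extremal:
  assumes "7 \<le> n"
  shows "TRVG {..<n} (extremal_edges n)"
  unfolding TRVG_def
proof (intro conjI exI[of _ "extremal_rect n"] ballI impI)
  have "\<exists>u v. e = {u, v} \<and> u \<noteq> v \<and> u \<in> {..<n} \<and> v \<in> {..<n}" if "e \<in> extremal_edges n" for e
    using that assms
  proof (rule extremal_edgeE)
    fix u v assume "e = {u, v}" "u < 4" "4 \<le> v" "v < n"
    then show ?thesis by (intro exI[of _ u] exI[of _ v]) auto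
  qed
  then show "simple_graph {..<n} (extremal_edges n)"
    unfolding simple_graph_def by blast
  fix u v assume "u \<in> {..<n}" "v \<in> {..<n}"
  show "proper_rect (extremal_rect n v)"
    using assms by (rule proper_extremal_rect)
  assume "u \<noteq> v"
  show "rect_interior (extremal_rect n u) \<inter> rect_interior (extremal_rect n v) = {}"
    using extremal_rect_spans(2) assms \<open>u \<in> {..<n}\<close> \<open>v \<in> {..<n}\<close> \<open>u \<noteq> v\<close>
    by (simp add: rect_interiors_disjoint_iff)
  show "{u, v} \<in> extremal_edges n \<longleftrightarrow> rect_visible (extremal_rect n u) (extremal_rect n v)"
    using extremal_rect_spans(1) assms \<open>u \<in> {..<n}\<close> \<open>v \<in> {..<n}\<close> \<open>u \<noteq> v\<close>
    by (simp add: rect_visible_iff_spans_meet proper_extremal_rect)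
qed

lemma bipartite_extremal:
  assumes "7 \<le> n"
  shows "bipartite {..<n} (extremal_edges n)"
  unfolding bipartite_def
proof (intro exI conjI)
  show "{..<4} \<union> {4..<n} = {..<n}" "{..<4} \<inter> {4..<n} = {}"
    using assms by auto
  show "\<forall>e \<in> extremal_edges n. e \<inter> {..<4} \<noteq> {} \<and> e \<inter> {4..<n} \<noteq> {}"
  proof
    fix e assume "e \<in> extremal_edges n"
    then obtain u v where "e = {u, v}" "u < 4" "4 \<le> v" "v < n"
      using assms by (rule extremal_edgeE)
    then show "e \<inter> {..<4} \<noteq> {} \<and> e \<inter> {4..<n} \<noteq> {}" by auto
  qed
qed

lemma card_extremal_edges:
  assumes "7 \<le> n"
  shows "card (extremal_edges n) = 2 * n - 2"
proof -
  let ?P = "{..<4} \<times> {4..<7} \<union> {..<2} \<times> {7..<n} :: (nat \<times> nat) set"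
  have "inj_on (\<lambda>(u, v). {u, v}) ?P"
    by (auto simp: inj_on_def doubleton_eq_iff)
  then have "card (extremal_edges n) = card ?P"
    unfolding extremal_edges_def by (rule card_image)
  also have "\<dots> = 4 * 3 + 2 * (n - 7)"
    by (subst card_Un_disjoint) (auto simp: card_cartesian_product)
  finally show ?thesis
    using assms by simp
qed

theorem theorem2:
  shows "(\<forall>(V :: 'a set) E. TRVG V E \<and> bipartite V E \<longrightarrow> card E \<le> 2 * card V - 2) \<and>
         (\<forall>n::nat. n \<ge> 7 \<longrightarrow>
            (\<exists>(V :: nat set) E. TRVG V E \<and> bipartite V E \<and> card V = n \<and> card E = 2 * n - 2))"
proof (intro conjI allI impI)
  fix V :: "'a set" and E
  assume "TRVG V E \<and> bipartite V E"
  then show "card E \<le> 2 * card V - 2"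
    by (blast intro: card_edges_le_if_bipartite_TRVG)
next
  fix n :: nat
  assume "n \<ge> 7"
  then show "\<exists>(V :: nat set) E. TRVG V E \<and> bipartite V E \<and> card V = n \<and> card E = 2 * n - 2"
    using TRVG_extremal bipartite_extremal card_extremal_edges card_lessThan by blast
qed

end
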